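(* Let $p\in(0,1)$ and $p_{-}=\min\{p,1/2\}$. For the probabilistic triad dynamics with parameter $p$ on the triadic cycle $TC_{n}$, the time to social balance $\tau_{SB}(TC_n)$ is $O(n/p_{-})$.
   Context: Edges are labeled $\pm1$; a triangle is balanced if the product of its edge labels is $1$. Probabilistic triad dynamics with parameter $p$: while an imbalanced triangle exists, choose an imbalanced triangle $T$ uniformly at random; if $T$ has a single negative edge $e$, then with probability $p$ turn $e$ positive and with probability $1-p$ turn one of the other two edges of $T$ (chosen at random) negative; otherwise ($T$ has three negative edges) change the label of a uniformly random edge of $T$. The triadic cycle $TC_n$ is the graph consisting of $n$ triangles chained together, consecutive triangles sharing an edge, with the two free edges $AB$ and $CD$ of the extreme triangles of the chain glued by identifying $A\equiv C$, $B\equiv D$; thus each triangle shares one edge with each of its two neighbours and has one edge belonging to no other triangle. For such a graph, $\tau_{SB}(G)$ is the maximum over all initial labelings $s$ of the expected number of steps for the dynamics started at $s$ to reach a state with no imbalanced triangle. *)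

theory Defs
  imports "HOL-Probability.Probability"
begin

text \<open>Signed graphs: a graph is given by its edge set E (a set of 2-element vertex sets);
  a labeling assigns to each edge a sign in {-1,1} (values outside E are irrelevant).\<close>

definition tri_edges :: "'a set \<Rightarrow> 'a set set" where
  "tri_edges T = {e. e \<subseteq> T \<and> card e = 2}"

definition triangles :: "'a set set \<Rightarrow> 'a set set" where
  "triangles E = {T. card T = 3 \<and> tri_edges T \<subseteq> E}"

definition balanced_tri :: "('a set \<Rightarrow> int) \<Rightarrow> 'a set \<Rightarrow> bool" where
  "balanced_tri s T \<longleftrightarrow> (\<Prod>e\<in>tri_edges T. s e) = 1"

definition imbalanced :: "'a set set \<Rightarrow> ('a set \<Rightarrow> int) \<Rightarrow> 'a set set" where
  "imbalanced E s = {T \<in> triangles E. \<not> balanced_tri s T}"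

definition triad_step :: "real \<Rightarrow> 'a set set \<Rightarrow> ('a set \<Rightarrow> int) \<Rightarrow> ('a set \<Rightarrow> int) pmf" where
  "triad_step p E s =
    (if imbalanced E s = {} then return_pmf s
     else pmf_of_set (imbalanced E s) \<bind> (\<lambda>T.
       let N = {e \<in> tri_edges T. s e = -1} in
       if card N = 1 then
         bernoulli_pmf p \<bind> (\<lambda>b.
           if b then return_pmf (s(the_elem N := 1))
           else map_pmf (\<lambda>f. s(f := -1)) (pmf_of_set (tri_edges T - N)))
       else map_pmf (\<lambda>f. s(f := - s f)) (pmf_of_set (tri_edges T))))"

fun triad_dist :: "real \<Rightarrow> 'a set set \<Rightarrow> ('a set \<Rightarrow> int) \<Rightarrow> nat \<Rightarrow> ('a set \<Rightarrow> int) pmf" where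
  "triad_dist p E s 0 = return_pmf s"
| "triad_dist p E s (Suc t) = triad_dist p E s t \<bind> triad_step p E"

text \<open>Expected number of steps to reach a state with no imbalanced triangle:
  E[T] = sum over t of P(T > t) = sum over t of P(state at time t is not balanced).\<close>
definition expected_time :: "real \<Rightarrow> 'a set set \<Rightarrow> ('a set \<Rightarrow> int) \<Rightarrow> ennreal" where
  "expected_time p E s =
     (\<Sum>t. ennreal (measure_pmf.prob (triad_dist p E s t) {x. imbalanced E x \<noteq> {}}))"

definition tau_SB :: "real \<Rightarrow> 'a set set \<Rightarrow> ennreal" where
  "tau_SB p E = (SUP s \<in> {s. \<forall>e\<in>E. s e \<in> {-1, 1}}. expected_time p E s)"

text \<open>The triadic cycle TC_n: vertices 0..n-1, triangles {i,i+1,i+2} (mod n) chained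
  cyclically; edge set = {i,i+1} and {i,i+2} mod n (the square of the n-cycle).\<close>
definition TC_edges :: "nat \<Rightarrow> nat set set" where
  "TC_edges n = {{i, (i + 1) mod n} | i. i < n} \<union> {{i, (i + 2) mod n} | i. i < n}"

end

theory Submission
  imports Defs
begin

(* The potential  a * #(imbalanced triangles) + #(negative edges),  a = 2 / p_-,  drops in
   expectation by at least 1 at every step from an unbalanced state, so the expected time to balance
   is at most its initial value, which on TC_n is at most a n + 2 n = O(n / p_-).
   On TC_n every edge lies in at most two triangles, and every triangle has a private edge (joining
   i and i + 2) lying in no other triangle.  Hence flipping an edge of the chosen triangle T balances
   T and unbalances at most one other triangle, none if the edge is private.  A triangle with three
   negative edges loses one negative edge whatever is flipped.  In a triangle with one negative edge
   that edge is flipped with probability p, removing a negative edge; otherwise a positive edge is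
   flipped, adding one, but then either the negative edge or one of the two positive edges is private,
   and the weight a of the resulting drop in imbalanced triangles outweighs the +1. *)

section \<open>Signed triangles and edge flips\<close>

lemma tri_edges_insert3:
  assumes "a \<noteq> b" "a \<noteq> c" "b \<noteq> c"
  shows "tri_edges {a,b,c} = {{a,b},{a,c},{b,c}}"
proof
  show "tri_edges {a,b,c} \<subseteq> {{a,b},{a,c},{b,c}}"
  proof
    fix e assume "e \<in> tri_edges {a,b,c}"
    then have "e \<subseteq> {a,b,c}" "card e = 2" by (auto simp: tri_edges_def)
    then obtain x y where "x \<noteq> y" "e = {x,y}" by (auto simp: card_2_iff)
    with \<open>e \<subseteq> {a,b,c}\<close> show "e \<in> {{a,b},{a,c},{b,c}}" by auto
  qed
  show "{{a,b},{a,c},{b,c}} \<subseteq> tri_edges {a,b,c}"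
    using assms by (auto simp: tri_edges_def)
qed

lemma card_tri_edges:
  assumes "card T = 3"
  shows "card (tri_edges T) = 3"
proof -
  obtain a b c where "T = {a,b,c}" "a \<noteq> b" "b \<noteq> c" "a \<noteq> c"
    using assms by (auto simp: card_3_iff)
  then show ?thesis by (simp add: tri_edges_insert3 doubleton_eq_iff)
qed

lemma Union_tri_edges:
  assumes "card T = 3"
  shows "\<Union>(tri_edges T) = T"
proof -
  obtain a b c where "T = {a,b,c}" "a \<noteq> b" "b \<noteq> c" "a \<noteq> c"
    using assms by (auto simp: card_3_iff)
  then show ?thesis by (auto simp: tri_edges_insert3)
qed

lemma card_tri_edges_triangle: "T \<in> triangles E \<Longrightarrow> card (tri_edges T) = 3"
  by (simp add: triangles_def card_tri_edges)

lemma finite_tri_edges_triangle: "T \<in> triangles E \<Longrightarrow> finite (tri_edges T)"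
  using card_tri_edges_triangle by (metis card.infinite zero_neq_numeral)

lemma finite_triangles:
  assumes "finite E"
  shows "finite (triangles E)"
proof -
  have "inj_on tri_edges (triangles E)"
    by (rule inj_on_inverseI[where g = Union]) (simp add: triangles_def Union_tri_edges)
  moreover have "tri_edges ` triangles E \<subseteq> Pow E"
    by (auto simp: triangles_def)
  ultimately show ?thesis
    using assms by (meson finite_Pow_iff finite_imageD finite_subset)
qed

definition signings :: "'a set set \<Rightarrow> ('a set \<Rightarrow> int) set" where
  "signings E = {s. \<forall>e\<in>E. s e \<in> {-1, 1}}"

definition negative_edges :: "'a set set \<Rightarrow> ('a set \<Rightarrow> int) \<Rightarrow> 'a set set" where
  "negative_edges E s = {e \<in> E. s e = -1}"

definition triangles_at :: "'a set set \<Rightarrow> 'a set \<Rightarrow> 'a set set" where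
  "triangles_at E f = {T \<in> triangles E. f \<in> tri_edges T}"

lemma flip_in_signings: "s \<in> signings E \<Longrightarrow> s(f := - s f) \<in> signings E"
  by (auto simp: signings_def)

lemma prod_sign_eq_power:
  fixes g :: "'b \<Rightarrow> int"
  assumes "finite A" "\<And>x. x \<in> A \<Longrightarrow> g x \<in> {-1, 1}"
  shows "prod g A = (-1) ^ card {x \<in> A. g x = -1}"
  using assms
proof (induction A rule: finite_induct)
  case (insert x F)
  then have "g x = -1 \<or> g x = 1" by auto
  then show ?case
  proof
    assume "g x = -1"
    then have "{y \<in> insert x F. g y = -1} = insert x {y \<in> F. g y = -1}" by auto
    with insert \<open>g x = -1\<close> show ?thesis by simp
  next
    assume "g x = 1"
    then have "{y \<in> insert x F. g y = -1} = {y \<in> F. g y = -1}" by auto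
    with insert \<open>g x = 1\<close> show ?thesis by simp
  qed
qed simp

lemma prod_upd_uminus:
  fixes s :: "'b \<Rightarrow> 'c::comm_ring_1"
  assumes "finite A" "x \<in> A"
  shows "prod (s(x := - s x)) A = - prod s A"
proof -
  have "prod (s(x := - s x)) A = - s x * prod (s(x := - s x)) (A - {x})"
    using assms by (simp add: prod.remove)
  also have "prod (s(x := - s x)) (A - {x}) = prod s (A - {x})"
    by (rule prod.cong) auto
  finally show ?thesis
    using assms by (simp add: prod.remove)
qed

lemma prod_tri_edges_sign:
  assumes "T \<in> triangles E" "s \<in> signings E"
  shows "(\<Prod>e\<in>tri_edges T. s e) = (-1) ^ card {e \<in> tri_edges T. s e = -1}"
  using assms by (intro prod_sign_eq_power finite_tri_edges_triangle)
    (auto simp: signings_def triangles_def)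

lemma odd_card_negative_tri_edges:
  assumes "T \<in> imbalanced E s" "s \<in> signings E"
  shows "odd (card {e \<in> tri_edges T. s e = -1})"
proof -
  have "(\<Prod>e\<in>tri_edges T. s e) \<noteq> 1"
    using assms(1) by (simp add: imbalanced_def balanced_tri_def)
  then show ?thesis
    using assms prod_tri_edges_sign by (fastforce simp: imbalanced_def)
qed

lemma balanced_tri_flip:
  assumes "T \<in> imbalanced E s" "s \<in> signings E" "f \<in> tri_edges T"
  shows "balanced_tri (s(f := - s f)) T"
proof -
  have T: "T \<in> triangles E" using assms(1) by (simp add: imbalanced_def)
  have "(\<Prod>e\<in>tri_edges T. s e) = -1"
    using prod_tri_edges_sign[OF T assms(2)] odd_card_negative_tri_edges[OF assms(1,2)] by simp
  moreover have "(\<Prod>e\<in>tri_edges T. (s(f := - s f)) e) = - (\<Prod>e\<in>tri_edges T. s e)"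
    by (rule prod_upd_uminus[OF finite_tri_edges_triangle[OF T] assms(3)])
  ultimately show ?thesis
    unfolding balanced_tri_def by simp
qed

lemma balanced_tri_upd_other:
  "f \<notin> tri_edges T \<Longrightarrow> balanced_tri (s(f := v)) T \<longleftrightarrow> balanced_tri s T"
  unfolding balanced_tri_def by (metis (no_types, lifting) fun_upd_other prod.cong)

lemma imbalanced_flip_subset:
  assumes "T \<in> imbalanced E s" "s \<in> signings E" "f \<in> tri_edges T"
  shows "imbalanced E (s(f := - s f)) \<subseteq> (imbalanced E s - {T}) \<union> (triangles_at E f - {T})"
proof
  fix T' assume T': "T' \<in> imbalanced E (s(f := - s f))"
  then have "T' \<noteq> T" using balanced_tri_flip[OF assms] by (auto simp: imbalanced_def)
  moreover have "T' \<in> imbalanced E s" if "f \<notin> tri_edges T'"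
    using T' balanced_tri_upd_other[OF that] by (simp add: imbalanced_def)
  ultimately show "T' \<in> (imbalanced E s - {T}) \<union> (triangles_at E f - {T})"
    using T' by (auto simp: imbalanced_def triangles_at_def)
qed

lemma card_negative_edges_flip:
  assumes "finite E" "s \<in> signings E" "f \<in> E"
  shows "real (card (negative_edges E (s(f := - s f)))) = real (card (negative_edges E s)) + s f"
proof -
  have fin: "finite (negative_edges E s)" using assms(1) by (simp add: negative_edges_def)
  have "s f = -1 \<or> s f = 1" using assms(2,3) by (auto simp: signings_def)
  then show ?thesis
  proof
    assume neg: "s f = -1"
    then have "negative_edges E (s(f := - s f)) = negative_edges E s - {f}"
      by (auto simp: negative_edges_def)
    moreover have "f \<in> negative_edges E s" using neg assms(3) by (simp add: negative_edges_def)
    ultimately have "card (negative_edges E s) = Suc (card (negative_edges E (s(f := - s f))))"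
      using card_Suc_Diff1[OF fin] by simp
    then show ?thesis using neg by simp
  next
    assume pos: "s f = 1"
    then have "negative_edges E (s(f := - s f)) = insert f (negative_edges E s)"
      using assms(3) by (auto simp: negative_edges_def)
    moreover have "f \<notin> negative_edges E s" using pos by (simp add: negative_edges_def)
    ultimately show ?thesis using fin pos by simp
  qed
qed

definition triad_potential :: "real \<Rightarrow> 'a set set \<Rightarrow> ('a set \<Rightarrow> int) \<Rightarrow> real" where
  "triad_potential a E s = a * card (imbalanced E s) + card (negative_edges E s)"

lemma triad_potential_nonneg: "0 \<le> a \<Longrightarrow> 0 \<le> triad_potential a E s"
  by (simp add: triad_potential_def)

definition triad_move :: "real \<Rightarrow> ('a set \<Rightarrow> int) \<Rightarrow> 'a set \<Rightarrow> ('a set \<Rightarrow> int) pmf" where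
  "triad_move p s T =
    (let N = {e \<in> tri_edges T. s e = -1} in
     if card N = 1 then
       bernoulli_pmf p \<bind> (\<lambda>b.
         if b then return_pmf (s(the_elem N := 1))
         else map_pmf (\<lambda>f. s(f := -1)) (pmf_of_set (tri_edges T - N)))
     else map_pmf (\<lambda>f. s(f := - s f)) (pmf_of_set (tri_edges T)))"

lemma triad_step_imbalanced:
  "imbalanced E s \<noteq> {} \<Longrightarrow> triad_step p E s = pmf_of_set (imbalanced E s) \<bind> triad_move p s"
  by (simp add: triad_step_def triad_move_def[abs_def])

lemma triad_move_one_negative:
  assumes "{e \<in> tri_edges T. s e = -1} = {g}"
  shows "triad_move p s T = bernoulli_pmf p \<bind> (\<lambda>b.
           if b then return_pmf (s(g := 1))
           else map_pmf (\<lambda>f. s(f := -1)) (pmf_of_set (tri_edges T - {g})))"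
  unfolding triad_move_def Let_def assms the_elem_eq by simp

lemma triad_move_all_negative:
  assumes "\<forall>e\<in>tri_edges T. s e = -1" "card (tri_edges T) = 3"
  shows "triad_move p s T = map_pmf (\<lambda>f. s(f := - s f)) (pmf_of_set (tri_edges T))"
proof -
  have "{e \<in> tri_edges T. s e = -1} = tri_edges T" using assms(1) by auto
  then show ?thesis using assms(2) by (simp add: triad_move_def)
qed

lemma negative_tri_edges_cases:
  assumes "T \<in> imbalanced E s" "s \<in> signings E"
  obtains g where "{e \<in> tri_edges T. s e = -1} = {g}" | "\<forall>e\<in>tri_edges T. s e = -1"
proof -
  let ?N = "{e \<in> tri_edges T. s e = -1}"
  have T: "T \<in> triangles E" using assms(1) by (simp add: imbalanced_def)
  have "card ?N \<le> 3"
    using card_mono[OF finite_tri_edges_triangle[OF T]] card_tri_edges_triangle[OF T] by fastforce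
  then have "card ?N = 1 \<or> card ?N = 3"
    using odd_card_negative_tri_edges[OF assms] by presburger
  then show ?thesis
  proof
    assume "card ?N = 1"
    then show ?thesis using that(1) by (auto simp: card_1_singleton_iff)
  next
    assume "card ?N = 3"
    then have "?N = tri_edges T"
      using card_tri_edges_triangle[OF T] finite_tri_edges_triangle[OF T]
      by (intro card_subset_eq) auto
    then show ?thesis using that(2) by blast
  qed
qed

lemma set_triad_move:
  assumes "T \<in> imbalanced E s" "s \<in> signings E"
  shows "set_pmf (triad_move p s T) \<subseteq> (\<lambda>f. s(f := - s f)) ` tri_edges T"
proof -
  have T: "T \<in> triangles E" using assms(1) by (simp add: imbalanced_def)
  note fin = finite_tri_edges_triangle[OF T] and card3 = card_tri_edges_triangle[OF T]
  show ?thesis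
  proof (cases rule: negative_tri_edges_cases[OF assms])
    case (1 g)
    then have g: "g \<in> tri_edges T" "s g = -1" by auto
    have "card (tri_edges T - {g}) = 2" using card3 g by (simp add: card_Diff_singleton)
    then have ne: "tri_edges T - {g} \<noteq> {}" by (metis card.empty zero_neq_numeral)
    have "s(g := 1) \<in> (\<lambda>f. s(f := - s f)) ` tri_edges T"
      using g by (intro image_eqI[of _ _ g]) auto
    moreover have "s(f := -1) \<in> (\<lambda>f. s(f := - s f)) ` tri_edges T" if "f \<in> tri_edges T - {g}" for f
    proof -
      have "s f = 1" using that 1 assms(2) T by (auto simp: signings_def triangles_def)
      then show ?thesis using that by (intro image_eqI[of _ _ f]) auto
    qed
    moreover have "set_pmf (triad_move p s T) \<subseteq> insert (s(g := 1)) ((\<lambda>f. s(f := -1)) ` (tri_edges T - {g}))"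
    proof
      fix x assume "x \<in> set_pmf (triad_move p s T)"
      then obtain b where "x \<in> set_pmf (if b then return_pmf (s(g := 1))
          else map_pmf (\<lambda>f. s(f := -1)) (pmf_of_set (tri_edges T - {g})))"
        unfolding triad_move_one_negative[OF 1] set_bind_pmf by blast
      then show "x \<in> insert (s(g := 1)) ((\<lambda>f. s(f := -1)) ` (tri_edges T - {g}))"
        using fin ne by (cases b) auto
    qed
    ultimately show ?thesis by blast
  next
    case 2
    have "tri_edges T \<noteq> {}" using card3 by auto
    then show ?thesis
      unfolding triad_move_all_negative[OF 2 card3] using fin by auto
  qed
qed

section \<open>Expected hitting times under a drift condition\<close>

lemma nn_integral_pmf_of_set_real:
  fixes h :: "'b \<Rightarrow> real"
  assumes "finite A" "A \<noteq> {}" "\<And>x. x \<in> A \<Longrightarrow> 0 \<le> h x"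
  shows "(\<integral>\<^sup>+x. ennreal (h x) \<partial>measure_pmf (pmf_of_set A)) = ennreal ((\<Sum>x\<in>A. h x) / card A)"
proof -
  have "(\<integral>\<^sup>+x. ennreal (h x) \<partial>measure_pmf (pmf_of_set A)) = (\<Sum>x\<in>A. ennreal (h x)) / card A"
    using assms by (simp add: nn_integral_pmf_of_set)
  also have "\<dots> = ennreal (\<Sum>x\<in>A. h x) / ennreal (real (card A))"
    using assms by (simp add: sum_ennreal ennreal_of_nat_eq_real_of_nat)
  also have "\<dots> = ennreal ((\<Sum>x\<in>A. h x) / real (card A))"
    using assms by (simp add: divide_ennreal sum_nonneg card_gt_0_iff)
  finally show ?thesis .
qed

lemma ennreal_add_one_le:
  assumes "0 \<le> x" "x + 1 \<le> y"
  shows "ennreal x + 1 \<le> ennreal y"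
proof -
  have "ennreal x + 1 = ennreal (x + 1)" using assms(1) by (simp add: ennreal_plus)
  then show ?thesis using assms(2) by (simp add: ennreal_leI)
qed

lemma ennreal_convex_combination:
  assumes "0 \<le> p" "p \<le> 1" "0 \<le> x" "0 \<le> y"
  shows "ennreal x * ennreal p + ennreal y * ennreal (1 - p) = ennreal (p * x + (1 - p) * y)"
proof -
  have "ennreal (p * x + (1 - p) * y) = ennreal (p * x) + ennreal ((1 - p) * y)"
    using assms by (intro ennreal_plus) auto
  then show ?thesis
    using assms by (simp add: ennreal_mult mult.commute)
qed

lemma expected_hitting_time_le_potential:
  fixes K :: "'a \<Rightarrow> 'a pmf" and D :: "nat \<Rightarrow> 'a pmf" and V :: "'a \<Rightarrow> ennreal"
  assumes D_0: "D 0 = return_pmf x0" and D_Suc: "\<And>t. D (Suc t) = D t \<bind> K"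
    and "x0 \<in> S" and closed: "\<And>x. x \<in> S \<Longrightarrow> set_pmf (K x) \<subseteq> S"
    and drift: "\<And>x. x \<in> S \<Longrightarrow> (\<integral>\<^sup>+y. V y \<partial>K x) + indicator I x \<le> V x"
  shows "(\<Sum>t. ennreal (measure_pmf.prob (D t) I)) \<le> V x0"
proof -
  have supp: "set_pmf (D t) \<subseteq> S" for t
    by (induction t) (use \<open>x0 \<in> S\<close> closed in \<open>auto simp: D_0 D_Suc set_bind_pmf\<close>)
  have partial: "(\<Sum>k<t. ennreal (measure_pmf.prob (D k) I)) + (\<integral>\<^sup>+y. V y \<partial>D t) \<le> V x0" for t
  proof (induction t)
    case 0
    then show ?case by (simp add: D_0)
  next
    case (Suc t)
    have "ennreal (measure_pmf.prob (D t) I) + (\<integral>\<^sup>+y. V y \<partial>D (Suc t))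
            = (\<integral>\<^sup>+x. (\<integral>\<^sup>+y. V y \<partial>K x) + indicator I x \<partial>D t)"
      by (subst nn_integral_add)
        (simp_all add: D_Suc nn_integral_bind_pmf measure_pmf.emeasure_eq_measure[symmetric] add.commute)
    also have "\<dots> \<le> (\<integral>\<^sup>+x. V x \<partial>D t)"
      using supp drift by (intro nn_integral_mono_AE AE_pmfI) blast
    finally have "(\<Sum>k<Suc t. ennreal (measure_pmf.prob (D k) I)) + (\<integral>\<^sup>+y. V y \<partial>D (Suc t))
                    \<le> (\<Sum>k<t. ennreal (measure_pmf.prob (D k) I)) + (\<integral>\<^sup>+x. V x \<partial>D t)"
      by (simp add: add.assoc add_left_mono)
    then show ?case using Suc.IH by order
  qed
  show ?thesis
    by (rule suminf_le_const[OF summableI])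
      (use partial in \<open>meson add_increasing2 order_trans zero_le order_refl\<close>)
qed

section \<open>Drift of the potential\<close>

lemma sum_le_card_mult_minus:
  fixes h :: "'b \<Rightarrow> real" and c d :: real
  assumes "finite A" "x \<in> A" "\<And>y. y \<in> A \<Longrightarrow> h y \<le> c" "h x \<le> c - d"
  shows "(\<Sum>y\<in>A. h y) \<le> real (card A) * c - d"
proof -
  have "(\<Sum>y\<in>A - {x}. h y) \<le> real (card (A - {x})) * c"
    using assms(3) by (intro sum_bounded_above) auto
  moreover have "real (card A) * c = real (card (A - {x})) * c + c"
    using card_Suc_Diff1[OF assms(1,2)] by (metis distrib_right mult_1 add.commute of_nat_Suc)
  ultimately show ?thesis
    using sum.remove[OF assms(1,2), of h] assms(4) by linarith
qed

(* X bounds the potential after flipping the negative edge, Y the mean potential after flipping one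
   of the two positive edges; b says whether the negative edge is private. *)
lemma one_negative_drift_arith:
  fixes p a P X Y :: real
  assumes "0 < p" "p < 1" "4 \<le> a" "2 \<le> p * a"
    and "X \<le> P - 1 - (if b then a else 0)" "Y \<le> P + 1 - (if b then 0 else a / 2)"
  shows "p * X + (1 - p) * Y + 1 \<le> P"
proof (cases b)
  case True
  have "p * X \<le> p * (P - 1 - a)" using assms True by (intro mult_left_mono) auto
  moreover have "(1 - p) * Y \<le> (1 - p) * (P + 1)" using assms True by (intro mult_left_mono) auto
  moreover have "p * (P - 1 - a) = p * P - p - p * a" "(1 - p) * (P + 1) = P + 1 - p * P - p"
    by (simp_all add: algebra_simps)
  ultimately show ?thesis using assms(1,4) by (smt (verit))
next
  case False
  have "p * X \<le> p * (P - 1)" using assms False by (intro mult_left_mono) auto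
  then have "p * X \<le> p * P - p" by (simp add: algebra_simps)
  moreover have "(1 - p) * (2 * Y) \<le> (1 - p) * (2 * P + 2 - a)" using assms False by (intro mult_left_mono) auto
  then have "2 * Y - 2 * (p * Y) \<le> 2 * P + 2 - 2 * (p * P) - 2 * p - a + p * a" by (simp add: algebra_simps)
  moreover have "(1 - p) * 4 \<le> (1 - p) * a" using assms by (intro mult_left_mono) auto
  then have "4 - 4 * p \<le> a - p * a" by (simp add: algebra_simps)
  moreover have "(1 - p) * Y = Y - p * Y" by (simp add: algebra_simps)
  ultimately show ?thesis by linarith
qed

lemma nn_integral_triad_move_one_negative:
  fixes V :: "('a set \<Rightarrow> int) \<Rightarrow> real"
  assumes g: "{e \<in> tri_edges T. s e = -1} = {g}" and T: "card (tri_edges T) = 3"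
    and p: "0 \<le> p" "p \<le> 1" and V: "\<And>x. 0 \<le> V x"
  shows "(\<integral>\<^sup>+y. ennreal (V y) \<partial>triad_move p s T)
           = ennreal (p * V (s(g := 1)) + (1 - p) * ((\<Sum>f\<in>tri_edges T - {g}. V (s(f := -1))) / 2))"
proof -
  define A where "A = tri_edges T - {g}"
  have "g \<in> tri_edges T" "finite (tri_edges T)"
    using g T by (auto intro: card_ge_0_finite)
  then have A: "finite A" "card A = 2"
    using T by (simp_all add: A_def card_Diff_singleton)
  then have avg: "(\<integral>\<^sup>+f. ennreal (V (s(f := -1))) \<partial>pmf_of_set A) = ennreal ((\<Sum>f\<in>A. V (s(f := -1))) / 2)"
    using nn_integral_pmf_of_set_real[OF A(1), of "\<lambda>f. V (s(f := -1))"] V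
    by (metis card.empty of_nat_numeral zero_neq_numeral)
  have "(\<integral>\<^sup>+y. ennreal (V y) \<partial>triad_move p s T)
          = ennreal (V (s(g := 1))) * ennreal p
            + (\<integral>\<^sup>+f. ennreal (V (s(f := -1))) \<partial>pmf_of_set A) * ennreal (1 - p)"
    using p by (simp add: triad_move_one_negative[OF g] A_def[symmetric] nn_integral_bind_pmf)
  also have "\<dots> = ennreal (p * V (s(g := 1)) + (1 - p) * ((\<Sum>f\<in>A. V (s(f := -1))) / 2))"
    unfolding avg using p V by (simp add: ennreal_convex_combination sum_nonneg)
  finally show ?thesis unfolding A_def .
qed

locale sparse_triangle_graph =
  fixes E :: "'a set set"
  assumes finite_edges: "finite E"
    and card_triangles_at: "card (triangles_at E f) \<le> 2"
    and private_edge: "T \<in> triangles E \<Longrightarrow> \<exists>f\<in>tri_edges T. triangles_at E f = {T}"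
begin

lemma finite_imbalanced: "finite (imbalanced E s)"
  using finite_triangles[OF finite_edges] by (rule finite_subset[rotated]) (auto simp: imbalanced_def)

lemma card_imbalanced_flip:
  assumes "T \<in> imbalanced E s" "s \<in> signings E" "f \<in> tri_edges T"
  shows "card (imbalanced E (s(f := - s f))) + (if triangles_at E f = {T} then 1 else 0)
           \<le> card (imbalanced E s)"
proof -
  have T: "T \<in> triangles_at E f" using assms by (simp add: imbalanced_def triangles_at_def)
  have fin_at: "finite (triangles_at E f)"
    using finite_triangles[OF finite_edges] by (rule finite_subset[rotated]) (auto simp: triangles_at_def)
  have other: "card (triangles_at E f - {T}) + (if triangles_at E f = {T} then 1 else 0) \<le> 1"
    using card_triangles_at[of f] T by (auto simp: card_Diff_singleton)
  have "card (imbalanced E (s(f := - s f))) \<le> card ((imbalanced E s - {T}) \<union> (triangles_at E f - {T}))"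
    using imbalanced_flip_subset[OF assms] finite_imbalanced fin_at by (intro card_mono) auto
  also have "\<dots> \<le> card (imbalanced E s - {T}) + card (triangles_at E f - {T})"
    by (rule card_Un_le)
  finally show ?thesis
    using other card_Suc_Diff1[OF finite_imbalanced assms(1)] by linarith
qed

lemma triad_potential_flip:
  assumes "T \<in> imbalanced E s" "s \<in> signings E" "f \<in> tri_edges T" "0 \<le> a"
  shows "triad_potential a E (s(f := - s f))
           \<le> triad_potential a E s + s f - (if triangles_at E f = {T} then a else 0)"
proof -
  have "f \<in> E" using assms(1,3) by (auto simp: imbalanced_def triangles_def)
  have "real (card (imbalanced E (s(f := - s f)))) + (if triangles_at E f = {T} then 1 else 0)
          \<le> real (card (imbalanced E s))"
    using card_imbalanced_flip[OF assms(1-3)]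
    by (cases "triangles_at E f = {T}") (simp_all add: of_nat_add[symmetric] del: of_nat_add)
  from mult_left_mono[OF this assms(4)] show ?thesis
    unfolding triad_potential_def card_negative_edges_flip[OF finite_edges assms(2) \<open>f \<in> E\<close>]
    by (cases "triangles_at E f = {T}") (simp_all add: algebra_simps)
qed

lemma mean_triad_potential_flip_positive:
  assumes T: "T \<in> imbalanced E s" and s: "s \<in> signings E"
    and g: "{e \<in> tri_edges T. s e = -1} = {g}" and a: "0 \<le> a"
  shows "(\<Sum>f\<in>tri_edges T - {g}. triad_potential a E (s(f := -1))) / 2
           \<le> triad_potential a E s + 1 - (if triangles_at E g = {T} then 0 else a / 2)"
proof -
  define \<Phi> where "\<Phi> = triad_potential a E"
  define A where "A = tri_edges T - {g}"
  have T': "T \<in> triangles E" using T by (simp add: imbalanced_def)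
  have "g \<in> tri_edges T" using g by auto
  then have A: "finite A" "card A = 2"
    using finite_tri_edges_triangle[OF T'] card_tri_edges_triangle[OF T']
    by (simp_all add: A_def card_Diff_singleton)
  have flip: "\<Phi> (s(f := -1)) \<le> \<Phi> s + 1 - (if triangles_at E f = {T} then a else 0)" if "f \<in> A" for f
  proof -
    have f: "f \<in> tri_edges T" using that by (simp add: A_def)
    have "s f = 1" using that g s T' by (auto simp: A_def signings_def triangles_def)
    then show ?thesis
      using triad_potential_flip[OF T s f a] by (simp add: \<Phi>_def)
  qed
  have flip_le: "\<Phi> (s(f := -1)) \<le> \<Phi> s + 1" if "f \<in> A" for f
    using flip[OF that] a by (auto split: if_split_asm)
  show ?thesis
  proof (cases "triangles_at E g = {T}")
    case True
    have "(\<Sum>f\<in>A. \<Phi> (s(f := -1))) \<le> card A * (\<Phi> s + 1)"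
      using flip_le by (rule sum_bounded_above)
    then show ?thesis using True A by (simp add: \<Phi>_def A_def)
  next
    case False
    obtain f0 where "f0 \<in> tri_edges T" "triangles_at E f0 = {T}"
      using private_edge[OF T'] by blast
    then have "f0 \<in> A" using False by (auto simp: A_def)
    have "\<Phi> (s(f0 := -1)) \<le> \<Phi> s + 1 - a"
      using flip[OF \<open>f0 \<in> A\<close>] \<open>triangles_at E f0 = {T}\<close> by simp
    then have "(\<Sum>f\<in>A. \<Phi> (s(f := -1))) \<le> card A * (\<Phi> s + 1) - a"
      using flip_le
      by (intro sum_le_card_mult_minus[where h = "\<lambda>f. \<Phi> (s(f := -1))", OF A(1) \<open>f0 \<in> A\<close>])
    then show ?thesis using False A by (simp add: \<Phi>_def A_def)
  qed
qed

lemma triad_potential_move_one_negative: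
  assumes T: "T \<in> imbalanced E s" and s: "s \<in> signings E"
    and g: "{e \<in> tri_edges T. s e = -1} = {g}"
    and p: "0 < p" "p < 1" and a: "4 \<le> a" "2 \<le> p * a"
  shows "(\<integral>\<^sup>+y. ennreal (triad_potential a E y) \<partial>triad_move p s T) + 1
           \<le> ennreal (triad_potential a E s)"
proof -
  define \<Phi> where "\<Phi> = triad_potential a E"
  define Y where "Y = (\<Sum>f\<in>tri_edges T - {g}. \<Phi> (s(f := -1))) / 2"
  have T': "T \<in> triangles E" using T by (simp add: imbalanced_def)
  have gT: "g \<in> tri_edges T" "s g = -1" and a0: "0 \<le> a" using g a by auto
  have \<Phi>_nonneg: "0 \<le> \<Phi> x" for x
    using a0 by (simp add: \<Phi>_def triad_potential_nonneg)
  have "\<Phi> (s(g := 1)) \<le> \<Phi> s - 1 - (if triangles_at E g = {T} then a else 0)"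
    using triad_potential_flip[OF T s gT(1) a0] gT(2) by (simp add: \<Phi>_def)
  moreover have "Y \<le> \<Phi> s + 1 - (if triangles_at E g = {T} then 0 else a / 2)"
    using mean_triad_potential_flip_positive[OF T s g a0] by (simp add: \<Phi>_def Y_def)
  ultimately have "p * \<Phi> (s(g := 1)) + (1 - p) * Y + 1 \<le> \<Phi> s"
    by (rule one_negative_drift_arith[OF p a])
  moreover have "0 \<le> p * \<Phi> (s(g := 1)) + (1 - p) * Y"
    using p \<Phi>_nonneg by (simp add: Y_def sum_nonneg)
  moreover have "(\<integral>\<^sup>+y. ennreal (\<Phi> y) \<partial>triad_move p s T) = ennreal (p * \<Phi> (s(g := 1)) + (1 - p) * Y)"
    unfolding Y_def using p \<Phi>_nonneg
    by (intro nn_integral_triad_move_one_negative[OF g card_tri_edges_triangle[OF T']]) auto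
  ultimately show ?thesis
    unfolding \<Phi>_def[symmetric] by (simp add: ennreal_add_one_le)
qed

lemma triad_potential_move_all_negative:
  assumes T: "T \<in> imbalanced E s" and s: "s \<in> signings E"
    and neg: "\<forall>e\<in>tri_edges T. s e = -1" and a: "0 \<le> a"
  shows "(\<integral>\<^sup>+y. ennreal (triad_potential a E y) \<partial>triad_move p s T) + 1
           \<le> ennreal (triad_potential a E s)"
proof -
  define \<Phi> where "\<Phi> = triad_potential a E"
  have T': "T \<in> triangles E" using T by (simp add: imbalanced_def)
  note fin = finite_tri_edges_triangle[OF T'] and card3 = card_tri_edges_triangle[OF T']
  have ne: "tri_edges T \<noteq> {}" using card3 by auto
  have \<Phi>_nonneg: "0 \<le> \<Phi> x" for x
    using a by (simp add: \<Phi>_def triad_potential_nonneg)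
  have "\<Phi> (s(f := - s f)) \<le> \<Phi> s - 1" if "f \<in> tri_edges T" for f
    using triad_potential_flip[OF T s that a] neg that a by (auto simp: \<Phi>_def split: if_split_asm)
  then have "(\<Sum>f\<in>tri_edges T. \<Phi> (s(f := - s f))) \<le> card (tri_edges T) * (\<Phi> s - 1)"
    by (intro sum_bounded_above)
  then have avg: "(\<Sum>f\<in>tri_edges T. \<Phi> (s(f := - s f))) / card (tri_edges T) + 1 \<le> \<Phi> s"
    using card3 by simp
  have "(\<integral>\<^sup>+y. ennreal (\<Phi> y) \<partial>triad_move p s T)
          = ennreal ((\<Sum>f\<in>tri_edges T. \<Phi> (s(f := - s f))) / card (tri_edges T))"
    using nn_integral_pmf_of_set_real[OF fin ne, of "\<lambda>f. \<Phi> (s(f := - s f))"] \<Phi>_nonneg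
    by (simp add: triad_move_all_negative[OF neg card3])
  then show ?thesis
    unfolding \<Phi>_def[symmetric] using avg \<Phi>_nonneg
    by (simp add: ennreal_add_one_le sum_nonneg)
qed

lemma triad_potential_move:
  assumes "T \<in> imbalanced E s" "s \<in> signings E"
    and "0 < p" "p < 1" "4 \<le> a" "2 \<le> p * a"
  shows "(\<integral>\<^sup>+y. ennreal (triad_potential a E y) \<partial>triad_move p s T) + 1
           \<le> ennreal (triad_potential a E s)"
  using assms
  by (cases rule: negative_tri_edges_cases[OF assms(1,2)])
    (simp_all add: triad_potential_move_one_negative triad_potential_move_all_negative)

lemma triad_potential_step:
  assumes "s \<in> signings E" "0 < p" "p < 1" "4 \<le> a" "2 \<le> p * a"
  shows "(\<integral>\<^sup>+y. ennreal (triad_potential a E y) \<partial>triad_step p E s)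
           + indicator {x. imbalanced E x \<noteq> {}} s \<le> ennreal (triad_potential a E s)"
proof (cases "imbalanced E s = {}")
  case True
  then show ?thesis by (simp add: triad_step_def)
next
  case False
  let ?I = "pmf_of_set (imbalanced E s)"
  have "(\<integral>\<^sup>+y. ennreal (triad_potential a E y) \<partial>triad_step p E s) + 1
          = (\<integral>\<^sup>+T. (\<integral>\<^sup>+y. ennreal (triad_potential a E y) \<partial>triad_move p s T) + 1 \<partial>?I)"
    using False
    by (subst nn_integral_add) (simp_all add: triad_step_imbalanced nn_integral_bind_pmf measure_pmf.emeasure_space_1)
  also have "\<dots> \<le> (\<integral>\<^sup>+T. ennreal (triad_potential a E s) \<partial>?I)"
    using False finite_imbalanced triad_potential_move[OF _ assms]
    by (intro nn_integral_mono_AE AE_pmfI) simp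
  also have "\<dots> = ennreal (triad_potential a E s)"
    by (simp add: measure_pmf.emeasure_space_1)
  finally show ?thesis using False by simp
qed

lemma set_triad_step_signings:
  assumes "s \<in> signings E"
  shows "set_pmf (triad_step p E s) \<subseteq> signings E"
proof (cases "imbalanced E s = {}")
  case True
  then show ?thesis using assms by (simp add: triad_step_def)
next
  case False
  show ?thesis
  proof
    fix x assume "x \<in> set_pmf (triad_step p E s)"
    then obtain T where "T \<in> imbalanced E s" "x \<in> set_pmf (triad_move p s T)"
      using False finite_imbalanced by (auto simp: triad_step_imbalanced set_bind_pmf)
    then obtain f where "x = s(f := - s f)"
      using set_triad_move[OF _ assms] by blast
    then show "x \<in> signings E" using flip_in_signings[OF assms] by simp
  qed
qed



lemma expected_time_le_potential:
  assumes "s \<in> signings E" "0 < p" "p < 1" "4 \<le> a" "2 \<le> p * a"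
  shows "expected_time p E s \<le> ennreal (triad_potential a E s)"
  unfolding expected_time_def
  using assms set_triad_step_signings triad_potential_step[OF _ assms(2-5)]
  by (intro expected_hitting_time_le_potential[where K = "triad_step p E" and S = "signings E"]) auto

lemma tau_SB_le:
  assumes "0 < p" "p < 1" "4 \<le> a" "2 \<le> p * a"
  shows "tau_SB p E \<le> ennreal (a * card (triangles E) + card E)"
  unfolding tau_SB_def
proof (rule SUP_least)
  fix s :: "'a set \<Rightarrow> int" assume "s \<in> {s. \<forall>e\<in>E. s e \<in> {-1, 1}}"
  then have s: "s \<in> signings E" by (simp add: signings_def)
  have "card (imbalanced E s) \<le> card (triangles E)"
    using finite_triangles[OF finite_edges] by (intro card_mono) (auto simp: imbalanced_def)
  moreover have "card (negative_edges E s) \<le> card E"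
    using finite_edges by (intro card_mono) (auto simp: negative_edges_def)
  ultimately have "triad_potential a E s \<le> a * card (triangles E) + card E"
    using assms unfolding triad_potential_def by (intro add_mono mult_left_mono) auto
  then show "expected_time p E s \<le> ennreal (a * card (triangles E) + card E)"
    using expected_time_le_potential[OF s assms] ennreal_leI order_trans by blast
qed

end

section \<open>The triadic cycle\<close>

lemma card_nat_3_sorted:
  assumes "card (T :: nat set) = 3"
  obtains a b c where "a < b" "b < c" "T = {a,b,c}"
proof -
  have fin: "finite T" using assms by (metis card.infinite zero_neq_numeral)
  define xs where "xs = sorted_list_of_set T"
  have "length xs = 3" using assms by (simp add: xs_def)
  then obtain a b c where abc: "xs = [a,b,c]" by (auto simp: numeral_3_eq_3 length_Suc_conv)
  have "sorted_wrt (<) xs" by (simp add: xs_def)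
  moreover have "set xs = T" using fin by (simp add: xs_def)
  ultimately show ?thesis using that abc by auto
qed

lemma Suc_mod_if: "(x::nat) < n \<Longrightarrow> (x + 1) mod n = (if x + 1 < n then x + 1 else 0)"
  by (simp add: mod_if)

lemma add2_mod_if: "(x::nat) < n \<Longrightarrow> 2 \<le> n \<Longrightarrow> (x + 2) mod n = (if x + 2 < n then x + 2 else x + 2 - n)"
  by (simp add: mod_if)

lemma Suc_mod_inj: "(j1::nat) < n \<Longrightarrow> j2 < n \<Longrightarrow> (j1 + 1) mod n = (j2 + 1) mod n \<Longrightarrow> j1 = j2"
  using Suc_mod_if[of j1 n] Suc_mod_if[of j2 n] by (auto split: if_splits)

lemma mod_succ_succ: "((i + 1) mod n + 1) mod n = (i + 2) mod (n :: nat)"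
  using mod_add_left_eq[of "i + 1" n 1] by simp

lemma TC_edges_eq_image:
  "TC_edges n = (\<lambda>i. {i, (i+1) mod n}) ` {..<n} \<union> (\<lambda>i. {i, (i+2) mod n}) ` {..<n}"
  by (auto simp: TC_edges_def)

lemma TC_edges_succ: "i < n \<Longrightarrow> {i, (i+1) mod n} \<in> TC_edges n"
  by (simp add: TC_edges_eq_image)

lemma TC_edges_succ2: "i < n \<Longrightarrow> {i, (i+2) mod n} \<in> TC_edges n"
  by (simp add: TC_edges_eq_image)

lemma TC_edges_subset: "e \<in> TC_edges n \<Longrightarrow> e \<subseteq> {..<n}"
  by (auto simp: TC_edges_def)

lemma TC_edges_iff:
  fixes u v n :: nat
  assumes "u < v" "v < n" "3 \<le> n"
  shows "{u,v} \<in> TC_edges n \<longleftrightarrow> v = u+1 \<or> v = u+2 \<or> u+n = v+1 \<or> u+n = v+2"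
proof
  assume "{u,v} \<in> TC_edges n"
  then obtain i where "i < n" "{u,v} = {i, (i+1) mod n} \<or> {u,v} = {i, (i+2) mod n}"
    unfolding TC_edges_def by blast
  then show "v = u+1 \<or> v = u+2 \<or> u+n = v+1 \<or> u+n = v+2"
    using assms by (auto simp: doubleton_eq_iff mod_if split: if_splits)
next
  have wrap: "(u+n) mod n = u" using assms by simp
  assume "v = u+1 \<or> v = u+2 \<or> u+n = v+1 \<or> u+n = v+2"
  then consider "v = (u+1) mod n" | "v = (u+2) mod n" | "u = (v+1) mod n" | "u = (v+2) mod n"
    using assms(2) wrap by (metis mod_less)
  then show "{u,v} \<in> TC_edges n"
  proof cases
    case 1
    show ?thesis unfolding 1 using assms by (intro TC_edges_succ) linarith
  next
    case 2
    show ?thesis unfolding 2 using assms by (intro TC_edges_succ2) linarith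
  next
    case 3
    show ?thesis unfolding 3 insert_commute[of _ v] using assms by (intro TC_edges_succ)
  next
    case 4
    show ?thesis unfolding 4 insert_commute[of _ v] using assms by (intro TC_edges_succ2)
  qed
qed

definition TC_triangle :: "nat \<Rightarrow> nat \<Rightarrow> nat set" where
  "TC_triangle n i = {i, (i+1) mod n, (i+2) mod n}"

lemma TC_triangle_distinct:
  fixes i n :: nat
  assumes "3 \<le> n" "i < n"
  shows "i \<noteq> (i+1) mod n" "i \<noteq> (i+2) mod n" "(i+1) mod n \<noteq> (i+2) mod n"
proof -
  have "2 \<le> n" using assms(1) by simp
  then show "i \<noteq> (i+1) mod n" "i \<noteq> (i+2) mod n" "(i+1) mod n \<noteq> (i+2) mod n"
    unfolding Suc_mod_if[OF assms(2)] add2_mod_if[OF assms(2) \<open>2 \<le> n\<close>] using assms by auto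
qed

lemma tri_edges_TC_triangle:
  assumes "3 \<le> n" "i < n"
  shows "tri_edges (TC_triangle n i) = {{i, (i+1) mod n}, {i, (i+2) mod n}, {(i+1) mod n, (i+2) mod n}}"
  unfolding TC_triangle_def by (rule tri_edges_insert3[OF TC_triangle_distinct[OF assms]])

lemma TC_triangle_in_triangles:
  assumes "3 \<le> n" "i < n"
  shows "TC_triangle n i \<in> triangles (TC_edges n)"
proof -
  have "card (TC_triangle n i) = 3"
    unfolding TC_triangle_def using TC_triangle_distinct[OF assms] by simp
  moreover have "(i+1) mod n < n" using assms by simp
  then have "{(i+1) mod n, (i+2) mod n} \<in> TC_edges n"
    using TC_edges_succ[of "(i+1) mod n" n] unfolding mod_succ_succ by blast
  ultimately show ?thesis
    unfolding triangles_def mem_Collect_eq tri_edges_TC_triangle[OF assms]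
    using TC_edges_succ[OF assms(2)] TC_edges_succ2[OF assms(2)] by blast
qed

lemma sorted_triangle_TC_edges:
  assumes n: "7 \<le> n" and abc: "a < b" "b < c"
    and E: "{a,b} \<in> TC_edges n" "{a,c} \<in> TC_edges n" "{b,c} \<in> TC_edges n"
  shows "{a,b,c} \<in> TC_triangle n ` {..<n}"
proof -
  have "c < n" using E(3) TC_edges_subset by blast
  have n3: "3 \<le> n" using n by simp
  have "b = a+1 \<or> b = a+2 \<or> a+n = b+1 \<or> a+n = b+2"
    using TC_edges_iff[OF abc(1) _ n3] E(1) abc(2) \<open>c < n\<close> by auto
  moreover have "c = a+1 \<or> c = a+2 \<or> a+n = c+1 \<or> a+n = c+2"
    using TC_edges_iff[OF _ \<open>c < n\<close> n3] E(2) abc by auto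
  moreover have "c = b+1 \<or> c = b+2 \<or> b+n = c+1 \<or> b+n = c+2"
    using TC_edges_iff[OF abc(2) \<open>c < n\<close> n3] E(3) by auto
  ultimately consider "b = a+1" "c = a+2" | "a = 0" "b+2 = n" "c+1 = n" | "a = 0" "b = 1" "c+1 = n"
    using abc \<open>c < n\<close> n by arith
  then show ?thesis
  proof cases
    case 1
    then have "{a,b,c} = TC_triangle n a" using \<open>c < n\<close> by (auto simp: TC_triangle_def)
    then show ?thesis using \<open>c < n\<close> abc by auto
  next
    case 2
    then have "(b+1) mod n = c" "(b+2) mod n = a" by auto
    then have "{a,b,c} = TC_triangle n b" by (auto simp: TC_triangle_def)
    then show ?thesis using \<open>c < n\<close> abc by auto
  next
    case 3
    then have "c + 2 = 1 + n" by simp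
    have "(c+1) mod n = a" using 3 by simp
    moreover have "(c+2) mod n = b"
      unfolding \<open>c + 2 = 1 + n\<close> mod_add_self2 using 3 n by simp
    ultimately have "{a,b,c} = TC_triangle n c" by (auto simp: TC_triangle_def)
    then show ?thesis using \<open>c < n\<close> by auto
  qed
qed

(* For n < 7 the square of the n-cycle has further triangles, e.g. {0, 2, 4} when n = 6. *)
lemma triangles_TC_edges:
  assumes n: "7 \<le> n"
  shows "triangles (TC_edges n) = TC_triangle n ` {..<n}"
proof
  show "TC_triangle n ` {..<n} \<subseteq> triangles (TC_edges n)"
    using TC_triangle_in_triangles n by auto
  show "triangles (TC_edges n) \<subseteq> TC_triangle n ` {..<n}"
  proof
    fix T assume T: "T \<in> triangles (TC_edges n)"
    then have "card T = 3" by (simp add: triangles_def)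
    then obtain a b c where abc: "a < b" "b < c" "T = {a,b,c}"
      using card_nat_3_sorted by blast
    have "tri_edges T \<subseteq> TC_edges n" using T by (simp add: triangles_def)
    then show "T \<in> TC_triangle n ` {..<n}"
      unfolding abc(3) using abc(1,2) by (intro sorted_triangle_TC_edges[OF n abc(1,2)]) (auto simp: tri_edges_insert3)
  qed
qed

lemma TC_triangle_edge_succ:
  assumes n: "7 \<le> n" and ij: "i < n" "j < n"
    and f: "{i, (i+1) mod n} \<in> tri_edges (TC_triangle n j)"
  shows "j = i \<or> (j+1) mod n = i"
proof -
  have n2: "2 \<le> n" "3 \<le> n" using n by auto
  show ?thesis using f n ij unfolding tri_edges_TC_triangle[OF n2(2) ij(2)]
    unfolding Suc_mod_if[OF ij(1)] Suc_mod_if[OF ij(2)] add2_mod_if[OF ij(1) n2(1)] add2_mod_if[OF ij(2) n2(1)]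
    by (auto simp: doubleton_eq_iff split: if_splits)
qed

lemma TC_triangle_edge_succ2:
  assumes n: "7 \<le> n" and ij: "i < n" "j < n"
    and f: "{i, (i+2) mod n} \<in> tri_edges (TC_triangle n j)"
  shows "j = i"
proof -
  have n2: "2 \<le> n" "3 \<le> n" using n by auto
  show ?thesis using f n ij unfolding tri_edges_TC_triangle[OF n2(2) ij(2)]
    unfolding Suc_mod_if[OF ij(1)] Suc_mod_if[OF ij(2)] add2_mod_if[OF ij(1) n2(1)] add2_mod_if[OF ij(2) n2(1)]
    by (auto simp: doubleton_eq_iff split: if_splits)
qed

lemma triangles_at_TC_succ2:
  assumes n: "7 \<le> n" and i: "i < n"
  shows "triangles_at (TC_edges n) {i, (i+2) mod n} = {TC_triangle n i}"
proof
  show "triangles_at (TC_edges n) {i, (i+2) mod n} \<subseteq> {TC_triangle n i}"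
    using TC_triangle_edge_succ2[OF n i] by (auto simp: triangles_at_def triangles_TC_edges[OF n])
  show "{TC_triangle n i} \<subseteq> triangles_at (TC_edges n) {i, (i+2) mod n}"
    using TC_triangle_in_triangles[OF _ i] tri_edges_TC_triangle[OF _ i] n by (simp add: triangles_at_def)
qed

lemma card_triangles_at_TC_succ:
  assumes n: "7 \<le> n" and i: "i < n"
  shows "card (triangles_at (TC_edges n) {i, (i+1) mod n}) \<le> 2"
proof -
  define J where "J = {j \<in> {..<n}. (j+1) mod n = i}"
  have "finite J" by (simp add: J_def)
  moreover have "\<forall>x\<in>J. \<forall>y\<in>J. x = y"
    using Suc_mod_inj unfolding J_def by (metis (mono_tags, lifting) lessThan_iff mem_Collect_eq)
  ultimately have "card J \<le> 1"
    using card_le_Suc0_iff_eq by fastforce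
  have "triangles_at (TC_edges n) {i, (i+1) mod n} \<subseteq> TC_triangle n ` insert i J"
    using TC_triangle_edge_succ[OF n i] by (auto simp: triangles_at_def triangles_TC_edges[OF n] J_def)
  then have "card (triangles_at (TC_edges n) {i, (i+1) mod n}) \<le> card (TC_triangle n ` insert i J)"
    by (rule card_mono[rotated]) (simp add: J_def)
  also have "\<dots> \<le> card (insert i J)"
    by (rule card_image_le) (simp add: J_def)
  also have "\<dots> \<le> 2"
    using \<open>card J \<le> 1\<close> by (simp add: card_insert_if J_def)
  finally show ?thesis .
qed

lemma sparse_triangle_graph_TC:
  assumes n: "7 \<le> n"
  shows "sparse_triangle_graph (TC_edges n)"
proof
  have n3: "3 \<le> n" using n by simp
  show "finite (TC_edges n)" by (simp add: TC_edges_eq_image)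
  fix f
  show "card (triangles_at (TC_edges n) f) \<le> 2"
  proof (cases "triangles_at (TC_edges n) f = {}")
    case False
    then obtain i where i: "i < n" "f \<in> tri_edges (TC_triangle n i)"
      by (auto simp: triangles_at_def triangles_TC_edges[OF n])
    then consider "f = {i, (i+1) mod n}" | "f = {i, (i+2) mod n}" | "f = {(i+1) mod n, (i+2) mod n}"
      unfolding tri_edges_TC_triangle[OF n3 i(1)] by blast
    then show ?thesis
    proof cases
      case 1
      then show ?thesis using card_triangles_at_TC_succ[OF n i(1)] by simp
    next
      case 2
      then show ?thesis using triangles_at_TC_succ2[OF n i(1)] by simp
    next
      case 3
      have "(i+1) mod n < n" using i by simp
      from card_triangles_at_TC_succ[OF n this] show ?thesis
        unfolding 3 mod_succ_succ .
    qed
  qed simp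
next
  fix T assume "T \<in> triangles (TC_edges n)"
  then obtain i where i: "i < n" "T = TC_triangle n i"
    using triangles_TC_edges[OF n] by auto
  have "{i, (i+2) mod n} \<in> tri_edges T"
    using i n by (simp add: tri_edges_TC_triangle)
  then show "\<exists>f\<in>tri_edges T. triangles_at (TC_edges n) f = {T}"
    using triangles_at_TC_succ2[OF n i(1)] i(2) by blast
qed

lemma card_TC_edges: "card (TC_edges n) \<le> 2 * n"
proof -
  have "card (TC_edges n) \<le> card ((\<lambda>i. {i, (i+1) mod n}) ` {..<n}) + card ((\<lambda>i. {i, (i+2) mod n}) ` {..<n})"
    unfolding TC_edges_eq_image by (rule card_Un_le)
  also have "\<dots> \<le> n + n"
    by (intro add_mono) (auto intro: card_image_le[THEN order_trans])
  finally show ?thesis by simp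
qed

lemma card_triangles_TC_edges: "7 \<le> n \<Longrightarrow> card (triangles (TC_edges n)) \<le> n"
  unfolding triangles_TC_edges by (rule card_image_le[THEN order_trans]) auto

theorem theorem3:
  shows "\<exists>C::real. C > 0 \<and> (\<exists>N::nat. \<forall>n\<ge>N. \<forall>p::real. 0 < p \<and> p < 1 \<longrightarrow>
           tau_SB p (TC_edges n) \<le> ennreal (C * real n / min p (1/2)))"
proof (intro exI conjI allI impI)
  show "(3::real) > 0" by simp
  fix n :: nat and p :: real
  assume n: "7 \<le> n" and p: "0 < p \<and> p < 1"
  define q where "q = min p (1/2)"
  have q: "0 < q" "q \<le> p" "q \<le> 1/2" using p by (auto simp: q_def)
  interpret sparse_triangle_graph "TC_edges n"
    by (rule sparse_triangle_graph_TC[OF n])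
  have a: "4 \<le> 2 / q" "2 \<le> p * (2 / q)"
    using q by (simp_all add: field_simps)
  have "tau_SB p (TC_edges n) \<le> ennreal (2 / q * card (triangles (TC_edges n)) + card (TC_edges n))"
    using p a by (intro tau_SB_le) auto
  also have "\<dots> \<le> ennreal (3 * real n / q)"
  proof (rule ennreal_leI)
    have "2 / q * card (triangles (TC_edges n)) \<le> 2 / q * real n"
      using card_triangles_TC_edges[OF n] q by (intro mult_left_mono) auto
    moreover have "real (card (TC_edges n)) \<le> 2 * real n"
      using card_TC_edges[of n] by linarith
    moreover have "2 * real n * q \<le> real n"
      using mult_left_mono[OF q(3), of "2 * real n"] by simp
    then have "2 * real n \<le> real n / q"
      using q(1) by (simp add: le_divide_eq)
    moreover have "3 * real n / q = 2 / q * real n + real n / q"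
      by (simp add: field_simps)
    ultimately show "2 / q * card (triangles (TC_edges n)) + card (TC_edges n) \<le> 3 * real n / q"
      by linarith
  qed
  finally show "tau_SB p (TC_edges n) \<le> ennreal (3 * real n / min p (1/2))"
    by (simp add: q_def)
qed

end
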